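(* Let $\Sigma:\ \dot x=-(A-M)x+d$ be $\gamma$-robust for some $\gamma>0$, let $u=(A-M)^{-1}\mathbb{1}$, and let $k$ be any index with $u_k=\max_l u_l$. Let $i\neq j$ with $(M)_{ij}=0$ and $m_{ij}>0$, and consider adding the edge $(i,j)$, i.e., replacing $M$ by $M+m_{ij}e_ie_j^{\mathrm T}$. If there exists a directed path in $\mathcal{G}(MA^{-1})$ from node $i$ to node $k$, then this change is not scalable.
   Context: $A=\mathrm{diag}(a_1,\dots,a_N)$ with all $a_i>0$, $M\in\mathbb{R}^{N\times N}$ has zero diagonal and nonnegative off-diagonal entries $m_{pq}$. For $\gamma>0$, a system $\dot x=-(A-M)x+d$ is $\gamma$-robust if $-(A-M)$ is Hurwitz and for every bounded disturbance $d$, the solution with $x(0)=0$ satisfies $\max_{p}|x_p(t)|\le\gamma\max_p\sup_{s\ge0}|d_p(s)|$ for all $t\ge0$. A structural change $\Sigma\mapsto\bar\Sigma$ is scalable if, for every $\gamma>0$ for which $\Sigma$ is $\gamma$-robust, $\bar\Sigma$ is $\gamma$-robust. The graph $\mathcal{G}(MA^{-1})$ has vertices $\{1,\dots,N\}$ and an edge $(p,q)$ iff $m_{pq}>0$. A directed path from $i$ to $k$ is a sequence of pairwise distinct nodes $(i_0,\dots,i_r)$, $r\ge0$, with $i_0=i$, $i_r=k$ and $m_{i_{l+1}i_l}>0$ for all $l$ (the case $r=0$, $i=k$, being the trivial path). *)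

theory Defs
  imports "HOL-Analysis.Analysis"
begin

definition diagm :: "real ^ 'n \<Rightarrow> real ^ 'n ^ 'n" where
  "diagm a = (\<chi> p q. if p = q then a $ p else 0)"

definition hurwitz :: "real ^ 'n ^ 'n \<Rightarrow> bool" where
  "hurwitz B \<longleftrightarrow>
     (\<forall>(c::complex) (v::complex ^ 'n). v \<noteq> 0 \<and>
        (\<chi> p q. complex_of_real (B $ p $ q)) *v v = c *s v \<longrightarrow> Re c < 0)"

definition robust :: "real ^ 'n \<Rightarrow> real ^ 'n ^ 'n \<Rightarrow> real \<Rightarrow> bool" where
  "robust a M \<gamma> \<longleftrightarrow>
     hurwitz (- (diagm a - M)) \<and>
     (\<forall>(d :: real \<Rightarrow> real ^ 'n) (x :: real \<Rightarrow> real ^ 'n).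
        continuous_on {0..} d \<and> bounded (d ` {0..}) \<and> x 0 = 0 \<and>
        (\<forall>t\<ge>0. (x has_vector_derivative ((- (diagm a - M)) *v x t + d t)) (at t within {0..}))
        \<longrightarrow> (\<forall>t\<ge>0. \<forall>p. \<bar>x t $ p\<bar> \<le>
                \<gamma> * (SUP p'. SUP s\<in>{0::real..}. \<bar>d s $ p'\<bar>)))"

definition scalable :: "real ^ 'n \<Rightarrow> real ^ 'n ^ 'n \<Rightarrow> real ^ 'n \<Rightarrow> real ^ 'n ^ 'n \<Rightarrow> bool" where
  "scalable a M a' M' \<longleftrightarrow> (\<forall>\<gamma>>0. robust a M \<gamma> \<longrightarrow> robust a' M' \<gamma>)"

text \<open>Directed path from i to k in G(M A^{-1}): distinct nodes i_0..i_r with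
  m_{i_{l+1} i_l} > 0.\<close>
definition dpath :: "real ^ 'n ^ 'n \<Rightarrow> 'n \<Rightarrow> 'n \<Rightarrow> bool" where
  "dpath M i k \<longleftrightarrow> (\<exists>xs. xs \<noteq> [] \<and> distinct xs \<and> hd xs = i \<and> last xs = k \<and>
      (\<forall>l. Suc l < length xs \<longrightarrow> M $ (xs ! Suc l) $ (xs ! l) > 0))"

end

theory Submission
  imports Defs "HOL-Real_Asymp.Real_Asymp"
begin

text \<open>With \<open>B = A - M\<close>, a Z-matrix such that \<open>-B\<close> is Hurwitz, \<open>B\<close> is inverse-nonnegative and
  \<open>u = B\<^sup>-\<^sup>1 \<one>\<close> is positive. The system is \<open>\<gamma>\<close>-robust exactly when \<open>\<gamma> \<ge> max u\<close>: the bound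
  \<open>\<bar>x\<^sub>p\<bar> \<le> \<parallel>d\<parallel> u\<^sub>p\<close> comes from invariance of the nonnegative orthant under \<open>x' = -B x + f\<close>
  with \<open>f \<ge> 0\<close>, and it is attained by the disturbance \<open>d = x' + B x\<close> for \<open>x t = (1 - e\<^sup>-\<^sup>\<epsilon>\<^sup>t) u\<close>.
  Adding the edge \<open>(i, j)\<close> turns \<open>B\<close> into \<open>B'\<close>, and \<open>z = B'\<^sup>-\<^sup>1 \<one> - u\<close> solves
  \<open>B' z = m\<^sub>i\<^sub>j u\<^sub>j e\<^sub>i \<ge> 0\<close>; hence \<open>z \<ge> 0\<close>, \<open>z\<^sub>i > 0\<close>, and positivity of \<open>z\<close> propagates along the path
  to \<open>k\<close>. So the new gain exceeds \<open>u\<^sub>k = max u\<close>: the perturbed system is not \<open>u\<^sub>k\<close>-robust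
  although the original one is.\<close>

lemma mat_plus_mult_component:
  "((mat s + B) *v v) $ p = s * v $ p + (B *v v) $ p"
proof -
  have "((mat s + B) *v v) $ p = (\<Sum>q\<in>UNIV. (if p = q then s * v $ q else 0) + B $ p $ q * v $ q)"
    by (simp add: matrix_vector_mult_def mat_def distrib_right; rule sum.cong; simp)
  then show ?thesis
    by (simp add: sum.distrib matrix_vector_mult_def)
qed

lemma uminus_matrix_vector_mult: "(- B) *v x = - (B *v x :: real ^ 'm)"
  by (simp add: vec_eq_iff matrix_vector_mult_def sum_negf)

lemma diagm_minus_mult_component:
  "((diagm a - N) *v v) $ p = a $ p * v $ p - (N *v v) $ p"
proof -
  have "(if p = q then a $ p else 0) * v $ q = (if q = p then a $ p * v $ p else 0)" for q
    by auto
  then have "(diagm a *v v) $ p = a $ p * v $ p"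
    unfolding diagm_def matrix_vector_mult_def by simp
  then show ?thesis
    by (simp add: matrix_vector_mult_diff_rdistrib)
qed

lemma invertible_mult_matrix_inv:
  fixes A :: "real ^ 'n ^ 'n"
  assumes "invertible A"
  shows "A *v (matrix_inv A *v c) = c"
proof -
  have "A ** matrix_inv A = mat 1"
    using assms unfolding invertible_def matrix_inv_def by (metis (mono_tags, lifting) someI_ex)
  then show ?thesis by (simp add: matrix_vector_mul_assoc)
qed

lemma nonneg_matrix_mult_nonneg:
  fixes N :: "real ^ 'n ^ 'm"
  assumes "\<forall>p q. 0 \<le> N $ p $ q" "0 \<le> z"
  shows "0 \<le> N *v z"
  using assms by (simp add: less_eq_vec_def matrix_vector_mult_def sum_nonneg)

lemma nonneg_matrix_mult_ge_entry:
  fixes N :: "real ^ 'n ^ 'm"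
  assumes "\<forall>p q. 0 \<le> N $ p $ q" "0 \<le> z"
  shows "N $ p $ r * z $ r \<le> (N *v z) $ p"
  unfolding matrix_vector_mult_def
  using member_le_sum[of r UNIV "\<lambda>q. N $ p $ q * z $ q"] assms by (simp add: less_eq_vec_def)

lemma matrix_vector_mult_one_lower_bound:
  fixes B :: "real ^ 'n ^ 'm"
  shows "- (1 + (\<Sum>p\<in>UNIV. \<Sum>q\<in>UNIV. \<bar>B $ p $ q\<bar>)) < (B *v vec 1) $ p"
proof -
  have "- (B *v vec 1) $ p = (\<Sum>q\<in>UNIV. - B $ p $ q)"
    by (simp add: matrix_vector_mult_def sum_negf)
  also have "\<dots> \<le> (\<Sum>q\<in>UNIV. \<bar>B $ p $ q\<bar>)"
    by (rule sum_mono) simp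
  also have "\<dots> < 1 + (\<Sum>p\<in>UNIV. \<Sum>q\<in>UNIV. \<bar>B $ p $ q\<bar>)"
    using member_le_sum[of p UNIV "\<lambda>p. \<Sum>q\<in>UNIV. \<bar>B $ p $ q\<bar>"] by (simp add: sum_nonneg)
  finally show ?thesis by simp
qed

section \<open>Z-matrices and inverse positivity\<close>

definition Z_matrix :: "real ^ 'n ^ 'n \<Rightarrow> bool" where
  "Z_matrix B \<longleftrightarrow> (\<forall>p q. p \<noteq> q \<longrightarrow> B $ p $ q \<le> 0)"

lemma Z_matrix_shift: "Z_matrix B \<Longrightarrow> Z_matrix (mat s + B)"
  by (simp add: Z_matrix_def mat_def)

lemma Z_matrix_diagm_minus:
  assumes "\<forall>p q. 0 \<le> M $ p $ q"
  shows "Z_matrix (diagm a - M)"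
  using assms by (simp add: Z_matrix_def diagm_def)

lemma Z_matrix_touching_mono:
  assumes "Z_matrix B" "y \<le> z" "y $ p = z $ p"
  shows "(B *v z) $ p \<le> (B *v y) $ p"
proof -
  have "(B *v z) $ p - (B *v y) $ p = (\<Sum>q\<in>UNIV. B $ p $ q * (z $ q - y $ q))"
    by (simp add: matrix_vector_mult_def sum_subtractf algebra_simps)
  also have "\<dots> \<le> 0"
  proof (rule sum_nonpos)
    fix q
    show "B $ p $ q * (z $ q - y $ q) \<le> 0"
      using assms by (cases "q = p") (auto simp: Z_matrix_def less_eq_vec_def mult_nonpos_nonneg)
  qed
  finally show ?thesis by simp
qed

lemma Z_matrix_nonneg_of_certificate:
  assumes Z: "Z_matrix B" and v: "0 \<le> v" and Bv: "\<forall>p. 0 < (B *v v) $ p"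
    and Bz: "0 \<le> B *v z"
  shows "0 \<le> z"
proof -
  have v_pos: "0 < v $ q" for q
  proof (rule ccontr)
    assume "\<not> 0 < v $ q"
    with v have "0 $ q = v $ q" by (simp add: less_eq_vec_def eq_iff)
    then have "(B *v v) $ q \<le> (B *v 0) $ q" by (rule Z_matrix_touching_mono[OF Z v])
    with Bv show False by (simp add: not_le[symmetric])
  qed
  \<comment> \<open>the largest \<open>\<mu>\<close> with \<open>\<mu> v \<le> z\<close>; at a touching index the row of \<open>B\<close> forces \<open>\<mu> \<ge> 0\<close>\<close>
  define \<mu> where "\<mu> = Min (range (\<lambda>q. z $ q / v $ q))"
  have "\<mu> \<in> range (\<lambda>q. z $ q / v $ q)"
    unfolding \<mu>_def by (rule Min_in) auto
  then obtain p where p: "z $ p / v $ p = \<mu>" by auto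
  have \<mu>_le: "\<mu> \<le> z $ q / v $ q" for q
    by (simp add: \<mu>_def)
  have below: "\<mu> *s v \<le> z"
    using \<mu>_le v_pos by (simp add: less_eq_vec_def pos_le_divide_eq)
  have touch: "(\<mu> *s v) $ p = z $ p"
    using p v_pos[of p] by (simp add: field_simps)
  have "0 \<le> \<mu>"
  proof (rule ccontr)
    assume "\<not> 0 \<le> \<mu>"
    have "(B *v z) $ p \<le> (B *v (\<mu> *s v)) $ p"
      by (rule Z_matrix_touching_mono[OF Z below touch])
    also have "\<dots> = \<mu> * (B *v v) $ p"
      by (simp add: matrix_vector_mult_def sum_distrib_left algebra_simps)
    also have "\<dots> < 0"
      using \<open>\<not> 0 \<le> \<mu>\<close> Bv by (simp add: mult_neg_pos)
    finally show False
      using Bz by (simp add: less_eq_vec_def not_le[symmetric])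
  qed
  then show ?thesis
    using below v by (simp add: less_eq_vec_def) (meson mult_nonneg_nonneg order_trans)
qed

lemma Z_matrix_nonneg_large_shift:
  fixes B :: "real ^ 'n ^ 'n"
  assumes Z: "Z_matrix B" and s: "1 + (\<Sum>p\<in>UNIV. \<Sum>q\<in>UNIV. \<bar>B $ p $ q\<bar>) \<le> s"
    and Cz: "0 \<le> (mat s + B) *v z"
  shows "0 \<le> z"
proof (rule Z_matrix_nonneg_of_certificate[OF Z_matrix_shift[OF Z] _ _ Cz])
  show "\<forall>p. 0 < ((mat s + B) *v vec 1) $ p"
  proof
    fix p
    show "0 < ((mat s + B) *v vec 1) $ p"
      using matrix_vector_mult_one_lower_bound[of B p] s by (simp add: mat_plus_mult_component)
  qed
qed (simp add: less_eq_vec_def)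

lemma Z_matrix_nonneg_of_shifted_certificate:
  fixes B :: "real ^ 'n ^ 'n"
  assumes Z: "Z_matrix B" and v: "0 \<le> v" and Cv: "(mat s + B) *v v = vec 1"
    and close: "(s - t) * (1 + (\<Sum>q\<in>UNIV. v $ q)) < 1" and Cz: "0 \<le> (mat t + B) *v z"
  shows "0 \<le> z"
proof (rule Z_matrix_nonneg_of_certificate[OF Z_matrix_shift[OF Z] v _ Cz], intro allI)
  fix p
  have "(s - t) * v $ p < 1"
  proof (cases "t \<le> s")
    case True
    have "v $ p \<le> 1 + (\<Sum>q\<in>UNIV. v $ q)"
      using v member_le_sum[of p UNIV "\<lambda>q. v $ q"] by (simp add: less_eq_vec_def)
    with True close show ?thesis
      by (meson diff_ge_0_iff_ge le_less_trans mult_left_mono)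
  next
    case False
    with v have "(s - t) * v $ p \<le> 0"
      by (simp add: less_eq_vec_def mult_nonpos_nonneg)
    then show ?thesis by simp
  qed
  moreover have "s * v $ p + (B *v v) $ p = 1"
    using arg_cong[OF Cv, of "\<lambda>y. y $ p"] by (simp add: mat_plus_mult_component)
  ultimately show "0 < ((mat t + B) *v v) $ p"
    by (simp add: mat_plus_mult_component left_diff_distrib)
qed

lemma continuous_on_shift_inverse:
  fixes B :: "real ^ 'n ^ 'n"
  assumes nz: "\<forall>s\<in>S. det (mat s + B) \<noteq> 0"
  shows "continuous_on S (\<lambda>s. matrix_inv (mat s + B) *v c)"
proof -
  \<comment> \<open>by Cramer's rule the inverse applied to \<open>c\<close> is a quotient of polynomials in \<open>s\<close>\<close>
  define C where "C s = (mat s + B :: real ^ 'n ^ 'n)" for s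
  have entry: "continuous_on S (\<lambda>s. C s $ p $ q)" for p q
    by (cases "p = q") (simp_all add: C_def mat_def continuous_intros)
  have det: "continuous_on S (\<lambda>s. det (F s))" if "\<And>p q. continuous_on S (\<lambda>s. F s $ p $ q)"
    for F :: "real \<Rightarrow> real ^ 'n ^ 'n"
    unfolding det_def by (intro continuous_intros that)
  have column: "continuous_on S (\<lambda>s. if q = k then c $ p else C s $ p $ q)" for p q k
    by (cases "q = k") (simp_all add: entry)
  have "continuous_on S (\<lambda>s. (\<chi> k. det (\<chi> p q. if q = k then c $ p else C s $ p $ q) / det (C s)))"
    using nz by (intro continuous_on_vec_lambda continuous_on_divide det)
      (simp_all add: column entry flip: C_def)
  moreover have "matrix_inv (C s) *v c
      = (\<chi> k. det (\<chi> p q. if q = k then c $ p else C s $ p $ q) / det (C s))" if "s \<in> S" for s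
    using nz that cramer[of "C s"] invertible_mult_matrix_inv[of "C s" c]
    by (auto simp: C_def invertible_det_nz)
  ultimately show ?thesis
    by (auto simp: C_def intro: continuous_on_eq)
qed

lemma Z_matrix_shift_inverse_nonneg_below:
  fixes B :: "real ^ 'n ^ 'n"
  assumes Z: "Z_matrix B" and nz: "\<forall>s\<ge>0. det (mat s + B) \<noteq> 0"
    and s0: "0 < s0" and V0: "0 \<le> matrix_inv (mat s0 + B) *v vec 1"
  obtains s' where "0 \<le> s'" "s' < s0" "0 \<le> matrix_inv (mat s' + B) *v vec 1"
proof -
  define V where "V s = matrix_inv (mat s + B) *v vec 1" for s
  have CV: "(mat s + B) *v V s = vec 1" if "0 \<le> s" for s
    using nz that by (simp add: V_def invertible_mult_matrix_inv invertible_det_nz)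
  define m where "m = 1 + (\<Sum>p\<in>UNIV. V s0 $ p)"
  have "1 \<le> m" using V0 by (simp add: m_def V_def less_eq_vec_def sum_nonneg)
  define s' where "s' = max 0 (s0 - 1 / (2 * m))"
  have "0 \<le> s'" "s' < s0"
    using s0 \<open>1 \<le> m\<close> by (auto simp: s'_def)
  have "(s0 - s') * m \<le> 1 / (2 * m) * m"
    using \<open>1 \<le> m\<close> by (intro mult_right_mono) (auto simp: s'_def)
  then have "(s0 - s') * m < 1"
    using \<open>1 \<le> m\<close> by simp
  moreover have "0 \<le> (mat s' + B) *v V s'"
    using CV[OF \<open>0 \<le> s'\<close>] by (simp add: less_eq_vec_def)
  ultimately have "0 \<le> V s'"
    using Z_matrix_nonneg_of_shifted_certificate[OF Z V0[folded V_def] CV[of s0]] s0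
    by (simp add: m_def)
  with \<open>0 \<le> s'\<close> \<open>s' < s0\<close> show ?thesis
    using that by (simp add: V_def)
qed

lemma Z_matrix_inverse_nonneg:
  fixes B :: "real ^ 'n ^ 'n"
  assumes Z: "Z_matrix B" and nz: "\<forall>s\<ge>0. det (mat s + B) \<noteq> 0"
  shows "0 \<le> matrix_inv B *v vec 1"
proof -
  \<comment> \<open>continuation in the shift \<open>s\<close>: the set of good shifts is closed, contains all large \<open>s\<close>,
    and can be extended to the left from any positive member\<close>
  define V where "V s = matrix_inv (mat s + B) *v vec 1" for s
  define T where "T = {0..} \<inter> V -` {0..}"
  have "closed T"
    unfolding T_def V_def using nz
    by (intro continuous_closed_preimage continuous_on_shift_inverse) auto
  define S where "S = 1 + (\<Sum>p\<in>UNIV. \<Sum>q\<in>UNIV. \<bar>B $ p $ q\<bar>)"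
  have "0 \<le> S" by (simp add: S_def sum_nonneg)
  then have "(mat S + B) *v V S = vec 1"
    using nz by (simp add: V_def invertible_mult_matrix_inv invertible_det_nz)
  then have "S \<in> T"
    using Z_matrix_nonneg_large_shift[OF Z _ , of S "V S"] \<open>0 \<le> S\<close>
    by (simp add: T_def S_def less_eq_vec_def)
  have bdd: "bdd_below T"
    by (rule bdd_belowI[of _ 0]) (simp add: T_def)
  have "Inf T \<in> T"
    using \<open>S \<in> T\<close> \<open>closed T\<close> bdd by (intro closed_contains_Inf) auto
  moreover have "Inf T = 0"
  proof (rule ccontr)
    assume "Inf T \<noteq> 0"
    with \<open>Inf T \<in> T\<close> have "0 < Inf T" "0 \<le> V (Inf T)" by (simp_all add: T_def)
    then obtain s' where "0 \<le> s'" "s' < Inf T" "0 \<le> V s'"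
      using Z_matrix_shift_inverse_nonneg_below[OF Z nz] unfolding V_def by blast
    then have "s' \<in> T" by (simp add: T_def)
    with bdd have "Inf T \<le> s'" by (simp add: cInf_lower)
    with \<open>s' < Inf T\<close> show False by simp
  qed
  ultimately show ?thesis
    by (simp add: T_def V_def)
qed

lemma hurwitz_det_shift_nonzero:
  fixes B :: "real ^ 'n ^ 'n"
  assumes H: "hurwitz (- B)" and s: "0 \<le> s"
  shows "det (mat s + B) \<noteq> 0"
proof
  assume "det (mat s + B) = 0"
  then have "\<exists>x. x \<noteq> 0 \<and> (mat s + B) *v x = 0"
    by (simp add: det_eq_0_rank matrix_nonfull_linear_equations_eq)
  then obtain x where x: "x \<noteq> 0" "(mat s + B) *v x = 0" by blast
  \<comment> \<open>so \<open>s \<ge> 0\<close> is a real eigenvalue of \<open>-B\<close>\<close>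
  define v where "v = (\<chi> p. complex_of_real (x $ p))"
  have "v \<noteq> 0"
    using x(1) by (simp add: v_def vec_eq_iff)
  moreover have "(\<chi> p q. complex_of_real ((- B) $ p $ q)) *v v = complex_of_real s *s v"
  proof -
    have "s * x $ p + (B *v x) $ p = 0" for p
      using arg_cong[OF x(2), of "\<lambda>y. y $ p"] by (simp add: mat_plus_mult_component)
    then have "((- B) *v x) $ p = s * x $ p" for p
      by (simp add: uminus_matrix_vector_mult add_eq_0_iff)
    moreover have "((\<chi> p q. complex_of_real ((- B) $ p $ q)) *v v) $ p
        = complex_of_real (((- B) *v x) $ p)" for p
      by (simp add: matrix_vector_mult_def v_def)
    ultimately show ?thesis
      by (simp add: vec_eq_iff v_def)
  qed
  ultimately have "Re (complex_of_real s) < 0"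
    using H unfolding hurwitz_def by blast
  with s show False by simp
qed

lemma hurwitz_invertible:
  fixes B :: "real ^ 'n ^ 'n"
  assumes "hurwitz (- B)"
  shows "invertible B"
  using hurwitz_det_shift_nonzero[OF assms, of 0] by (simp add: invertible_det_nz)

lemma hurwitz_mult_matrix_inv:
  fixes B :: "real ^ 'n ^ 'n"
  assumes "hurwitz (- B)"
  shows "B *v (matrix_inv B *v c) = c"
  using assms by (simp add: invertible_mult_matrix_inv hurwitz_invertible)

lemma hurwitz_Z_matrix_nonneg:
  fixes B :: "real ^ 'n ^ 'n"
  assumes Z: "Z_matrix B" and H: "hurwitz (- B)" and Bz: "0 \<le> B *v z"
  shows "0 \<le> z"
proof -
  have "0 \<le> matrix_inv B *v vec 1"
    using hurwitz_det_shift_nonzero[OF H] by (intro Z_matrix_inverse_nonneg[OF Z]) blast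
  then show ?thesis
    by (rule Z_matrix_nonneg_of_certificate[OF Z _ _ Bz]) (simp add: hurwitz_mult_matrix_inv[OF H])
qed

section \<open>Invariance of the nonnegative orthant\<close>

lemma first_touching_time:
  fixes h :: "real \<Rightarrow> real ^ 'n"
  assumes cont: "continuous_on {0..} h" and h0: "\<forall>q. 0 < h 0 $ q"
    and t1: "0 \<le> t1" "h t1 $ p1 \<le> 0"
  obtains ts p where "0 < ts" "h ts $ p = 0" "0 \<le> h ts"
    "\<And>t q. 0 \<le> t \<Longrightarrow> t < ts \<Longrightarrow> 0 < h t $ q"
proof -
  define S where "S = (\<Union>q. {0..t1} \<inter> (\<lambda>t. h t $ q) -` {..0})"
  have "closed S"
    unfolding S_def using cont
    by (intro closed_UN ballI continuous_closed_preimage continuous_on_component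
        continuous_on_subset[OF cont]) auto
  moreover have "t1 \<in> S" "bdd_below S"
    using t1 by (auto simp: S_def intro: bdd_belowI[of _ 0])
  ultimately have "Inf S \<in> S"
    by (intro closed_contains_Inf) auto
  then obtain p where p: "h (Inf S) $ p \<le> 0" and "0 \<le> Inf S"
    by (auto simp: S_def)
  have "Inf S \<le> t1"
    using \<open>t1 \<in> S\<close> \<open>bdd_below S\<close> by (rule cInf_lower)
  have before: "0 < h t $ q" if "0 \<le> t" "t < Inf S" for t q
  proof (rule ccontr)
    assume "\<not> 0 < h t $ q"
    with that \<open>Inf S \<le> t1\<close> have "t \<in> S" by (auto simp: S_def not_less)
    then have "Inf S \<le> t" using \<open>bdd_below S\<close> by (rule cInf_lower)
    with that show False by simp
  qed
  have "0 < Inf S"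
    using p h0 \<open>0 \<le> Inf S\<close> by (metis order.order_iff_strict not_le)
  have touch: "0 \<le> h (Inf S) $ q" for q
  proof (rule continuous_ge_on_closure[where f = "\<lambda>t. h t $ q" and S = "{0..<Inf S}"])
    show "continuous_on (closure {0..<Inf S}) (\<lambda>t. h t $ q)"
      using \<open>0 < Inf S\<close> by (intro continuous_on_component continuous_on_subset[OF cont]) auto
  qed (use \<open>0 < Inf S\<close> before in \<open>auto intro: less_imp_le\<close>)
  show ?thesis
  proof (rule that[OF \<open>0 < Inf S\<close> _ _ before])
    show "h (Inf S) $ p = 0" using p touch[of p] by simp
  qed (simp_all add: less_eq_vec_def touch)
qed

lemma positive_orthant_invariant:
  fixes h :: "real \<Rightarrow> real ^ 'n"
  assumes cont: "continuous_on {0..} h" and h0: "\<forall>q. 0 < h 0 $ q"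
    and deriv: "\<And>t q. 0 \<le> t \<Longrightarrow> ((\<lambda>t. h t $ q) has_real_derivative h' t q) (at t within {0..})"
    and inward: "\<And>t q. 0 < t \<Longrightarrow> 0 \<le> h t \<Longrightarrow> h t $ q = 0 \<Longrightarrow> 0 < h' t q"
    and t: "0 \<le> t"
  shows "0 < h t $ p"
proof (rule ccontr)
  assume "\<not> 0 < h t $ p"
  then obtain ts q where ts: "0 < ts" "h ts $ q = 0" "0 \<le> h ts"
      and before: "\<And>t q. 0 \<le> t \<Longrightarrow> t < ts \<Longrightarrow> 0 < h t $ q"
    using first_touching_time[OF cont h0 t, of p] by auto
  from has_real_derivative_pos_inc_left[OF deriv[OF less_imp_le[OF ts(1)]] inward[OF ts(1) ts(3) ts(2)]]
  obtain d where d: "0 < d"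
      "\<And>\<eta>. 0 < \<eta> \<Longrightarrow> ts - \<eta> \<in> {0..} \<Longrightarrow> \<eta> < d \<Longrightarrow> h (ts - \<eta>) $ q < h ts $ q"
    by blast
  define \<eta> where "\<eta> = min (d / 2) ts"
  have "h (ts - \<eta>) $ q < 0" "0 < h (ts - \<eta>) $ q"
    using d ts before[of "ts - \<eta>" q] by (auto simp: \<eta>_def)
  then show False by simp
qed

lemma Z_matrix_ode_pos_perturbed:
  fixes B :: "real ^ 'n ^ 'n" and w f :: "real \<Rightarrow> real ^ 'n"
  assumes Z: "Z_matrix B"
    and der: "\<forall>t\<ge>0. (w has_vector_derivative ((- B) *v w t + f t)) (at t within {0..})"
    and f: "\<forall>t\<ge>0. 0 \<le> f t" and w0: "0 \<le> w 0" and \<epsilon>: "0 < \<epsilon>" and t: "0 \<le> t"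
  defines "L \<equiv> 1 + (\<Sum>p\<in>UNIV. \<Sum>q\<in>UNIV. \<bar>B $ p $ q\<bar>)"
  shows "0 < w t $ p + \<epsilon> * exp (L * t)"
proof -
  \<comment> \<open>the growth rate \<open>L\<close> of the perturbation dominates the row sums of \<open>-B\<close>,
    so the field points strictly into the orthant\<close>
  define h where "h t = w t + (\<epsilon> * exp (L * t)) *\<^sub>R vec 1" for t
  have "continuous_on {0..} w"
    using der by (auto simp: continuous_on_eq_continuous_within intro: has_vector_derivative_continuous)
  then have cont: "continuous_on {0..} h"
    unfolding h_def by (intro continuous_intros)
  have deriv: "((\<lambda>t. h t $ q) has_real_derivative ((- B) *v w t + f t) $ q + \<epsilon> * (exp (L * t) * L))
      (at t within {0..})" if "0 \<le> t" for q t
  proof -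
    have "((\<lambda>t. w t $ q) has_vector_derivative ((- B) *v w t + f t) $ q) (at t within {0..})"
      using bounded_linear.has_vector_derivative[OF bounded_linear_vec_nth] der that by blast
    then show ?thesis
      unfolding h_def has_real_derivative_iff_has_vector_derivative[symmetric]
      by (auto intro!: derivative_eq_intros)
  qed
  have inward: "0 < ((- B) *v w s + f s) $ q + \<epsilon> * (exp (L * s) * L)"
    if "0 < s" "0 \<le> h s" "h s $ q = 0" for s q
  proof -
    define e where "e = \<epsilon> * exp (L * s)"
    have "0 \<le> ((- B) *v h s) $ q"
      using Z_matrix_touching_mono[OF Z that(2), of q] that(3) by (simp add: uminus_matrix_vector_mult)
    moreover have "((- B) *v w s) $ q = ((- B) *v h s) $ q + e * (B *v vec 1) $ q"
      by (simp add: h_def e_def matrix_vector_right_distrib matrix_vector_mult_scaleR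
          uminus_matrix_vector_mult)
    moreover have "0 < e * (B *v vec 1) $ q + e * L"
      using matrix_vector_mult_one_lower_bound[of B q] \<epsilon>
      by (simp add: L_def e_def flip: distrib_left)
    moreover have "0 \<le> f s $ q"
      using f that(1) by (simp add: less_eq_vec_def)
    ultimately show ?thesis
      by (simp add: e_def)
  qed
  have "0 < h t $ p"
    by (rule positive_orthant_invariant[OF cont _ deriv inward t])
      (use w0 \<epsilon> in \<open>auto simp: h_def less_eq_vec_def add_nonneg_pos\<close>)
  then show ?thesis by (simp add: h_def)
qed

lemma Z_matrix_ode_nonneg:
  fixes B :: "real ^ 'n ^ 'n" and w f :: "real \<Rightarrow> real ^ 'n"
  assumes Z: "Z_matrix B"
    and der: "\<forall>t\<ge>0. (w has_vector_derivative ((- B) *v w t + f t)) (at t within {0..})"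
    and f: "\<forall>t\<ge>0. 0 \<le> f t" and w0: "0 \<le> w 0" and t: "0 \<le> t"
  shows "0 \<le> w t"
  unfolding less_eq_vec_def
proof (rule allI, rule ccontr)
  fix p
  define L where "L = 1 + (\<Sum>p\<in>UNIV. \<Sum>q\<in>UNIV. \<bar>B $ p $ q\<bar>)"
  assume "\<not> 0 $ p \<le> w t $ p"
  then have "w t $ p < 0" by simp
  then have "0 < - w t $ p / (2 * exp (L * t))" by (simp add: divide_neg_pos)
  from Z_matrix_ode_pos_perturbed[OF Z der f w0 this t, of p, folded L_def]
  show False using \<open>w t $ p < 0\<close> by simp
qed

section \<open>The robustness gain\<close>

abbreviation sup_norm :: "(real \<Rightarrow> real ^ 'n) \<Rightarrow> real" where
  "sup_norm d \<equiv> (SUP p. SUP s\<in>{0::real..}. \<bar>d s $ p\<bar>)"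

lemma abs_le_sup_norm:
  fixes d :: "real \<Rightarrow> real ^ 'n"
  assumes "bounded (d ` {0..})" "0 \<le> s"
  shows "\<bar>d s $ p\<bar> \<le> sup_norm d"
proof -
  obtain K where K: "\<forall>y\<in>d ` {0..}. norm y \<le> K"
    using assms(1) bounded_iff by blast
  have "bdd_above ((\<lambda>s. \<bar>d s $ q\<bar>) ` {0::real..})" for q
    by (rule bdd_aboveI[of _ K]) (use K component_le_norm_cart order_trans in blast)
  then have "\<bar>d s $ p\<bar> \<le> (SUP s\<in>{0::real..}. \<bar>d s $ p\<bar>)"
    using assms(2) by (intro cSUP_upper) auto
  also have "\<dots> \<le> sup_norm d"
    by (intro cSUP_upper) (auto intro: bdd_above_finite)
  finally show ?thesis .
qed

lemma sup_norm_le: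
  fixes d :: "real \<Rightarrow> real ^ 'n"
  assumes "\<forall>s\<ge>0. \<forall>p. \<bar>d s $ p\<bar> \<le> c"
  shows "sup_norm d \<le> c"
  using assms by (intro cSUP_least) auto

lemma bounded_of_component_bound:
  fixes d :: "real \<Rightarrow> real ^ 'n"
  assumes "\<forall>s\<in>S. \<forall>q. \<bar>d s $ q\<bar> \<le> c"
  shows "bounded (d ` S)"
  unfolding bounded_iff
  using assms order_trans[OF norm_le_l1_cart sum_bounded_above[of UNIV "\<lambda>q. \<bar>d _ $ q\<bar>" c]]
  by (intro exI[of _ "real CARD('n) * c"]) auto

lemma le_of_saturating_bound:
  fixes \<epsilon> c \<gamma> :: real
  assumes "0 < \<epsilon>" and "\<forall>t\<ge>0. (1 - exp (- \<epsilon> * t)) * c \<le> \<gamma>"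
  shows "c \<le> \<gamma>"
proof (rule tendsto_upperbound[OF _ _ trivial_limit_at_top_linorder])
  show "((\<lambda>t. (1 - exp (- \<epsilon> * t)) * c) \<longlongrightarrow> c) at_top"
    using \<open>0 < \<epsilon>\<close> by real_asymp
  show "\<forall>\<^sub>F t in at_top. (1 - exp (- \<epsilon> * t)) * c \<le> \<gamma>"
    using assms(2) unfolding eventually_at_top_linorder by blast
qed

lemma Z_matrix_ode_bound:
  fixes B :: "real ^ 'n ^ 'n" and x d :: "real \<Rightarrow> real ^ 'n"
  assumes Z: "Z_matrix B" and u: "0 \<le> u" "B *v u = vec 1"
    and der: "\<forall>t\<ge>0. (x has_vector_derivative ((- B) *v x t + d t)) (at t within {0..})"
    and x0: "x 0 = 0" and dD: "\<forall>s\<ge>0. \<forall>p. \<bar>d s $ p\<bar> \<le> D" and t: "0 \<le> t"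
  shows "\<bar>x t $ p\<bar> \<le> D * u $ p"
proof -
  \<comment> \<open>\<open>D u \<plusminus> x\<close> solves the same equation with the nonnegative input \<open>D \<plusminus> d\<close>\<close>
  have "0 \<le> D" using dD[rule_format, of 0] by (meson abs_ge_zero order_trans order_refl)
  have "0 \<le> D * u $ p + \<sigma> * x t $ p" if \<sigma>: "\<sigma> \<in> {-1, 1}" for \<sigma>
  proof -
    have "0 \<le> D *\<^sub>R u + \<sigma> *\<^sub>R x t"
    proof (rule Z_matrix_ode_nonneg[OF Z _ _ _ t, where f = "\<lambda>t. D *\<^sub>R vec 1 + \<sigma> *\<^sub>R d t"])
      show "\<forall>t\<ge>0. ((\<lambda>t. D *\<^sub>R u + \<sigma> *\<^sub>R x t) has_vector_derivative
          ((- B) *v (D *\<^sub>R u + \<sigma> *\<^sub>R x t) + (D *\<^sub>R vec 1 + \<sigma> *\<^sub>R d t))) (at t within {0..})"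
        using der u(2)
        by (auto intro!: derivative_eq_intros simp: uminus_matrix_vector_mult algebra_simps)
      show "\<forall>t\<ge>0. 0 \<le> D *\<^sub>R vec 1 + \<sigma> *\<^sub>R d t"
      proof (intro allI impI)
        fix s :: real
        assume "0 \<le> s"
        then have "\<bar>d s $ q\<bar> \<le> D" for q using dD by blast
        then have "0 \<le> D + d s $ q" "0 \<le> D - d s $ q" for q
          using abs_le_iff[of "d s $ q" D] by simp_all
        with \<sigma> show "0 \<le> D *\<^sub>R vec 1 + \<sigma> *\<^sub>R d s"
          by (auto simp: less_eq_vec_def abs_le_iff)
      qed
      show "0 \<le> D *\<^sub>R u + \<sigma> *\<^sub>R x 0"
        using x0 u(1) \<open>0 \<le> D\<close> by (simp add: less_eq_vec_def)
    qed
    then show ?thesis by (simp add: less_eq_vec_def)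
  qed
  from this[of 1] this[of "-1"] show ?thesis by (simp add: abs_le_iff)
qed

lemma robust_if_inverse_bound:
  fixes a :: "real ^ 'n" and M :: "real ^ 'n ^ 'n"
  assumes M: "\<forall>p q. 0 \<le> M $ p $ q" and H: "hurwitz (- (diagm a - M))"
    and \<gamma>: "\<forall>p. (matrix_inv (diagm a - M) *v vec 1) $ p \<le> \<gamma>"
  shows "robust a M \<gamma>"
  unfolding robust_def
proof (intro conjI allI impI H)
  define B where "B = diagm a - M"
  define u where "u = matrix_inv B *v vec 1"
  have Z: "Z_matrix B" using M by (simp add: B_def Z_matrix_diagm_minus)
  have Bu: "B *v u = vec 1"
    using H by (simp add: B_def u_def hurwitz_mult_matrix_inv)
  have u: "0 \<le> u"
    using hurwitz_Z_matrix_nonneg[OF Z] H Bu by (simp add: B_def less_eq_vec_def)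
  fix d x :: "real \<Rightarrow> real ^ 'n" and t :: real and p
  assume sol: "continuous_on {0..} d \<and> bounded (d ` {0..}) \<and> x 0 = 0 \<and>
      (\<forall>t\<ge>0. (x has_vector_derivative ((- (diagm a - M)) *v x t + d t)) (at t within {0..}))"
    and t: "0 \<le> t"
  have der: "\<forall>t\<ge>0. (x has_vector_derivative ((- B) *v x t + d t)) (at t within {0..})"
    using sol by (simp add: B_def)
  have "\<forall>s\<ge>0. \<forall>p. \<bar>d s $ p\<bar> \<le> sup_norm d"
    using sol abs_le_sup_norm by blast
  then have "\<bar>x t $ p\<bar> \<le> sup_norm d * u $ p"
    using Z_matrix_ode_bound[OF Z u Bu der _ _ t] sol by blast
  also have "\<dots> \<le> \<gamma> * sup_norm d"
  proof -
    have "0 \<le> sup_norm d"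
      using abs_le_sup_norm[of d 0 p] sol by (meson abs_ge_zero order_trans order_refl)
    from mult_right_mono[OF \<gamma>[rule_format, of p] this] show ?thesis
      by (simp add: u_def B_def mult.commute)
  qed
  finally show "\<bar>x t $ p\<bar> \<le> \<gamma> * sup_norm d" .
qed

lemma saturating_input_abs_le:
  fixes u :: "real ^ 'n"
  assumes \<epsilon>: "0 < \<epsilon>" "\<forall>q. \<epsilon> * \<bar>u $ q\<bar> \<le> 1" and s: "0 \<le> s"
  shows "\<bar>((\<epsilon> * exp (- \<epsilon> * s)) *\<^sub>R u + (1 - exp (- \<epsilon> * s)) *\<^sub>R vec 1) $ q\<bar> \<le> 1"
proof -
  define e where "e = exp (- \<epsilon> * s)"
  have e: "0 < e" "e \<le> 1"
    using s \<epsilon> by (auto simp: e_def)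
  have "\<bar>e * (\<epsilon> * u $ q) + (1 - e)\<bar> \<le> \<bar>e * (\<epsilon> * u $ q)\<bar> + \<bar>1 - e\<bar>"
    by (rule abs_triangle_ineq)
  also have "\<dots> = e * (\<epsilon> * \<bar>u $ q\<bar>) + (1 - e)"
    using e \<epsilon> by (simp add: abs_mult)
  also have "\<dots> \<le> e * 1 + (1 - e)"
    using e \<epsilon> by (intro add_right_mono mult_left_mono) auto
  finally show ?thesis
    by (simp add: e_def mult.assoc mult.left_commute)
qed

lemma robust_inverse_bound:
  fixes a :: "real ^ 'n" and M :: "real ^ 'n ^ 'n"
  assumes rob: "robust a M \<gamma>" and \<gamma>: "0 \<le> \<gamma>"
  shows "\<bar>(matrix_inv (diagm a - M) *v vec 1) $ p\<bar> \<le> \<gamma>"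
proof -
  define B where "B = diagm a - M"
  define u where "u = matrix_inv B *v vec 1"
  have Bu: "B *v u = vec 1"
    using rob by (simp add: robust_def B_def u_def hurwitz_mult_matrix_inv)
  \<comment> \<open>a disturbance with all components in \<open>[-1, 1]\<close> whose response \<open>x\<close> tends to \<open>u\<close>\<close>
  define \<epsilon> where "\<epsilon> = 1 / (1 + (\<Sum>q\<in>UNIV. \<bar>u $ q\<bar>))"
  define x where "x t = (1 - exp (- \<epsilon> * t)) *\<^sub>R u" for t
  define d where "d t = (\<epsilon> * exp (- \<epsilon> * t)) *\<^sub>R u + (1 - exp (- \<epsilon> * t)) *\<^sub>R vec 1" for t
  have "0 < \<epsilon>" by (simp add: \<epsilon>_def add_pos_nonneg sum_nonneg)
  have "\<epsilon> * \<bar>u $ q\<bar> \<le> 1" for q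
    using member_le_sum[of q UNIV "\<lambda>q. \<bar>u $ q\<bar>"] by (simp add: \<epsilon>_def add_pos_nonneg sum_nonneg)
  then have d_le: "\<forall>s\<ge>0. \<forall>q. \<bar>d s $ q\<bar> \<le> 1"
    unfolding d_def using saturating_input_abs_le[OF \<open>0 < \<epsilon>\<close>] by blast
  have "(- B) *v x t + d t = (\<epsilon> * exp (- \<epsilon> * t)) *\<^sub>R u" for t
    by (simp add: x_def d_def uminus_matrix_vector_mult Bu algebra_simps)
  moreover have "(x has_vector_derivative (\<epsilon> * exp (- \<epsilon> * t)) *\<^sub>R u) (at t within {0..})" for t
    unfolding x_def by (auto intro!: derivative_eq_intros)
  ultimately have "\<forall>t\<ge>0. (x has_vector_derivative ((- (diagm a - M)) *v x t + d t)) (at t within {0..})"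
    unfolding B_def by simp
  moreover have "continuous_on {0..} d"
    unfolding d_def by (intro continuous_intros)
  moreover have "bounded (d ` {0..})"
    using d_le by (intro bounded_of_component_bound) auto
  moreover have "x 0 = 0" by (simp add: x_def)
  ultimately have "\<bar>x t $ p\<bar> \<le> \<gamma> * sup_norm d" if "0 \<le> t" for t
    using rob that unfolding robust_def by blast
  moreover have "\<gamma> * sup_norm d \<le> \<gamma>"
    using mult_left_mono[OF sup_norm_le[OF d_le] \<gamma>] by simp
  ultimately have "\<forall>t\<ge>0. (1 - exp (- \<epsilon> * t)) * \<bar>u $ p\<bar> \<le> \<gamma>"
    using \<open>0 < \<epsilon>\<close> by (auto simp: x_def abs_mult intro: order_trans)
  from le_of_saturating_bound[OF \<open>0 < \<epsilon>\<close> this] show ?thesis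
    by (simp add: u_def B_def)
qed

section \<open>Adding an edge at the start of a path\<close>

lemma inverse_row_sums_pos:
  fixes a :: "real ^ 'n" and M :: "real ^ 'n ^ 'n"
  assumes a: "\<forall>p. 0 < a $ p" and M: "\<forall>p q. 0 \<le> M $ p $ q"
    and H: "hurwitz (- (diagm a - M))"
  shows "0 < (matrix_inv (diagm a - M) *v vec 1) $ p"
proof -
  define u where "u = matrix_inv (diagm a - M) *v vec 1"
  have Bu: "(diagm a - M) *v u = vec 1"
    using H by (simp add: u_def hurwitz_mult_matrix_inv)
  then have "0 \<le> u"
    using hurwitz_Z_matrix_nonneg[OF Z_matrix_diagm_minus[OF M] H] by (simp add: less_eq_vec_def)
  then have "0 \<le> (M *v u) $ p"
    using nonneg_matrix_mult_nonneg[OF M] by (simp add: less_eq_vec_def)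
  moreover have "a $ p * u $ p = 1 + (M *v u) $ p"
    using arg_cong[OF Bu, of "\<lambda>v. v $ p"] by (simp add: diagm_minus_mult_component)
  ultimately have "0 < a $ p * u $ p" by simp
  with a[rule_format, of p] show ?thesis by (simp add: u_def zero_less_mult_iff)
qed

lemma dpath_propagates_pos:
  fixes M :: "real ^ 'n ^ 'n" and a z :: "real ^ 'n"
  assumes path: "dpath M i k" and a: "\<forall>p. 0 < a $ p"
    and edge: "\<And>p r. M $ p $ r * z $ r \<le> a $ p * z $ p" and zi: "0 < z $ i"
  shows "0 < z $ k"
proof -
  obtain xs where xs: "xs \<noteq> []" "hd xs = i" "last xs = k"
      "\<forall>l. Suc l < length xs \<longrightarrow> M $ (xs ! Suc l) $ (xs ! l) > 0"
    using path unfolding dpath_def by blast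
  have "0 < z $ (xs ! l)" if "l < length xs" for l
    using that
  proof (induction l)
    case 0
    then show ?case using xs(1,2) zi by (simp add: hd_conv_nth)
  next
    case (Suc l)
    then have "0 < M $ (xs ! Suc l) $ (xs ! l) * z $ (xs ! l)"
      using xs(4) by simp
    also have "\<dots> \<le> a $ (xs ! Suc l) * z $ (xs ! Suc l)" by (rule edge)
    finally show ?case
      using a[rule_format, of "xs ! Suc l"] by (simp add: zero_less_mult_iff)
  qed
  then show ?thesis
    using xs(1,3) by (metis last_conv_nth diff_less length_greater_0_conv zero_less_one)
qed

lemma inverse_row_sums_difference:
  fixes a :: "real ^ 'n" and M E :: "real ^ 'n ^ 'n"
  assumes H: "hurwitz (- (diagm a - M))" and H': "hurwitz (- (diagm a - (M + E)))"
  shows "(diagm a - (M + E)) *v (matrix_inv (diagm a - (M + E)) *v vec 1 - matrix_inv (diagm a - M) *v vec 1)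
      = E *v (matrix_inv (diagm a - M) *v vec 1)"
  using hurwitz_mult_matrix_inv[OF H] hurwitz_mult_matrix_inv[OF H']
  by (simp add: matrix_vector_mult_diff_distrib matrix_vector_mult_diff_rdistrib
      matrix_vector_mult_add_rdistrib algebra_simps)

lemma inverse_row_sums_increase_along_path:
  fixes a :: "real ^ 'n" and M E :: "real ^ 'n ^ 'n"
  assumes a: "\<forall>p. 0 < a $ p" and M: "\<forall>p q. 0 \<le> M $ p $ q"
    and E: "\<forall>p q. 0 \<le> E $ p $ q" and Eij: "0 < E $ i $ j"
    and H: "hurwitz (- (diagm a - M))" and H': "hurwitz (- (diagm a - (M + E)))"
    and path: "dpath M i k"
  shows "(matrix_inv (diagm a - M) *v vec 1) $ k < (matrix_inv (diagm a - (M + E)) *v vec 1) $ k"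
proof -
  define u where "u = matrix_inv (diagm a - M) *v vec 1"
  define u' where "u' = matrix_inv (diagm a - (M + E)) *v vec 1"
  define z where "z = u' - u"
  have ME: "\<forall>p q. 0 \<le> (M + E) $ p $ q"
    using M E by simp
  have upos: "0 < u $ p" for p
    unfolding u_def by (rule inverse_row_sums_pos[OF a M H])
  have Eu: "0 \<le> E *v u"
    using upos by (intro nonneg_matrix_mult_nonneg[OF E]) (simp add: less_eq_vec_def less_imp_le)
  have Bz: "(diagm a - (M + E)) *v z = E *v u"
    unfolding z_def u_def u'_def by (rule inverse_row_sums_difference[OF H H'])
  have "0 \<le> z"
    using hurwitz_Z_matrix_nonneg[OF Z_matrix_diagm_minus[OF ME] H'] Bz Eu by simp
  have az: "a $ p * z $ p = (E *v u) $ p + ((M + E) *v z) $ p" for p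
    using arg_cong[OF Bz, of "\<lambda>v. v $ p"] by (simp add: diagm_minus_mult_component)
  have "0 < z $ k"
  proof (rule dpath_propagates_pos[OF path a])
    fix p r
    have "M $ p $ r * z $ r \<le> (M + E) $ p $ r * z $ r"
      using E \<open>0 \<le> z\<close> by (simp add: mult_right_mono less_eq_vec_def)
    also have "\<dots> \<le> ((M + E) *v z) $ p"
      by (rule nonneg_matrix_mult_ge_entry[OF ME \<open>0 \<le> z\<close>])
    also have "\<dots> \<le> a $ p * z $ p"
      using az[of p] Eu by (simp add: less_eq_vec_def)
    finally show "M $ p $ r * z $ r \<le> a $ p * z $ p" .
  next
    have "0 < E $ i $ j * u $ j"
      using Eij upos by simp
    also have "\<dots> \<le> (E *v u) $ i"
      using upos by (intro nonneg_matrix_mult_ge_entry[OF E]) (simp add: less_eq_vec_def less_imp_le)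
    also have "\<dots> \<le> a $ i * z $ i"
      using az[of i] nonneg_matrix_mult_nonneg[OF ME \<open>0 \<le> z\<close>] by (simp add: less_eq_vec_def)
    finally show "0 < z $ i"
      using a[rule_format, of i] by (simp add: zero_less_mult_iff)
  qed
  then show ?thesis by (simp add: z_def u_def u'_def)
qed

theorem mainTheorem8:
  fixes a :: "real ^ 'n" and M :: "real ^ 'n ^ 'n" and \<gamma>0 mij :: real and i j k :: 'n
  assumes apos: "\<forall>p. a $ p > 0"
    and Mdiag: "\<forall>p. M $ p $ p = 0"
    and Mnonneg: "\<forall>p q. M $ p $ q \<ge> 0"
    and gpos: "\<gamma>0 > 0"
    and rob: "robust a M \<gamma>0"
    and kmax: "\<forall>l. (matrix_inv (diagm a - M) *v vec 1) $ l \<le> (matrix_inv (diagm a - M) *v vec 1) $ k"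
    and ij: "i \<noteq> j" and Mij: "M $ i $ j = 0" and mpos: "mij > 0"
    and path: "dpath M i k"
  shows "\<not> scalable a M a (M + (\<chi> p q. if p = i \<and> q = j then mij else 0))"
proof
  define E :: "real ^ 'n ^ 'n" where "E = (\<chi> p q. if p = i \<and> q = j then mij else 0)"
  define u where "u = matrix_inv (diagm a - M) *v vec 1"
  define u' where "u' = matrix_inv (diagm a - (M + E)) *v vec 1"
  have H: "hurwitz (- (diagm a - M))"
    using rob by (simp add: robust_def)
  have "robust a M (u $ k)"
    using robust_if_inverse_bound[OF Mnonneg H] kmax by (simp add: u_def)
  moreover assume "scalable a M a (M + E)"
  moreover have "0 < u $ k"
    unfolding u_def by (rule inverse_row_sums_pos[OF apos Mnonneg H])
  ultimately have rob': "robust a (M + E) (u $ k)"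
    unfolding scalable_def by blast
  then have "\<bar>u' $ k\<bar> \<le> u $ k"
    using \<open>0 < u $ k\<close> unfolding u'_def by (intro robust_inverse_bound) simp_all
  moreover have "u $ k < u' $ k"
    unfolding u_def u'_def
    using mpos rob' by (intro inverse_row_sums_increase_along_path[OF apos Mnonneg _ _ H _ path])
      (auto simp: E_def robust_def)
  ultimately show False by simp
qed

end
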